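(* Let $M\geq 1$, $P=4M-3$, and let $x\in\ell(\mathbb{Z}_P)$ satisfy $x[p]=0$ for all $p=M,\ldots,4M-4$. Then for all $p=1,\ldots,2M-2$, $$\operatorname{CirAut}(x+Rx)[p]=2\operatorname{Re}\langle x,T^px\rangle+\langle x,RT^{-p}x\rangle.$$
   Context: $\ell(\mathbb{Z}_P)$ denotes the space of $P$-periodic functions $u\colon\mathbb{Z}\to\mathbb{C}$, with inner product $\langle u,v\rangle=\sum_{p\in\mathbb{Z}_P}u[p]\overline{v[p]}$. The translation operator is $(T^pu)[p']:=u[p'-p]$ and the reversal operator is $(Ru)[p]:=u[-p]$. The circular autocorrelation is $\operatorname{CirAut}(u)[p]:=\langle u,T^pu\rangle=\sum_{p'\in\mathbb{Z}_P}u[p']\overline{u[p'-p]}$. *)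

theory Defs
  imports Complex_Main
begin

text \<open>Elements of ell(Z_P): functions int \<Rightarrow> complex that are P-periodic.\<close>
definition periodic_fun :: "nat \<Rightarrow> (int \<Rightarrow> complex) \<Rightarrow> bool" where
  "periodic_fun P u \<longleftrightarrow> (\<forall>p. u (p + int P) = u p)"

definition inner_ZP :: "nat \<Rightarrow> (int \<Rightarrow> complex) \<Rightarrow> (int \<Rightarrow> complex) \<Rightarrow> complex" where
  "inner_ZP P u v = (\<Sum>p\<in>{0..<int P}. u p * cnj (v p))"

definition transl :: "int \<Rightarrow> (int \<Rightarrow> complex) \<Rightarrow> (int \<Rightarrow> complex)" where
  "transl p u = (\<lambda>q. u (q - p))"

definition reversal :: "(int \<Rightarrow> complex) \<Rightarrow> (int \<Rightarrow> complex)" where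
  "reversal u = (\<lambda>p. u (- p))"

definition CirAut :: "nat \<Rightarrow> (int \<Rightarrow> complex) \<Rightarrow> int \<Rightarrow> complex" where
  "CirAut P u p = inner_ZP P u (transl p u)"

end

theory Submission
  imports Defs
begin

text \<open>Expanding the autocorrelation of x + Rx gives four sums over a period. The first is
  \<langle>x, T^p x\<rangle>, the second is \<langle>x, R T^-p x\<rangle>, and the last, after the substitution
  q \<mapsto> p - q, is the conjugate of the first. The remaining cross sum has terms
  x[-q] conj(x[q-p]), whose arguments add up to -p: since x is supported on the residues
  0, \<dots>, M-1 and 1 \<le> p \<le> 2M-2, the residue of -p is too large to be a sum of two of them,
  so every cross term vanishes.\<close>

lemma periodic_add_mult:
  fixes f :: "int \<Rightarrow> 'a"
  assumes periodic: "\<And>q. f (q + N) = f q"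
  shows "f (a + k * N) = f a"
proof (induction k rule: int_induct[where k = 0])
  case (step2 i)
  have "f (a + (i - 1) * N) = f (a + (i - 1) * N + N)" by (rule periodic[symmetric])
  also have "\<dots> = f (a + i * N)" by (simp add: algebra_simps)
  finally show ?case using step2.IH by simp
qed (simp_all add: periodic distrib_right flip: add.assoc)

lemma periodic_mod:
  fixes f :: "int \<Rightarrow> 'a"
  assumes "\<And>q. f (q + N) = f q"
  shows "f (q mod N) = f q"
  using periodic_add_mult[where f = f and N = N, OF assms, of "q mod N" "q div N"] by simp

lemma sum_periodic_reflect:
  fixes f :: "int \<Rightarrow> 'a::comm_monoid_add"
  assumes periodic: "\<And>q. f (q + N) = f q" and "N > 0"
  shows "(\<Sum>q\<in>{0..<N}. f (c - q)) = (\<Sum>q\<in>{0..<N}. f q)"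
proof -
  let ?r = "\<lambda>q. (c - q) mod N"
  have "bij_betw ?r {0..<N} {0..<N}"
    by (rule bij_betw_byWitness[where f' = ?r]) (use \<open>N > 0\<close> in \<open>auto simp: mod_diff_right_eq\<close>)
  then have "(\<Sum>q\<in>{0..<N}. f (?r q)) = (\<Sum>q\<in>{0..<N}. f q)"
    by (rule sum.reindex_bij_betw)
  then show ?thesis by (simp add: periodic_mod[where f = f and N = N, OF periodic])
qed

lemma sum_reflected_product_eq_cnj:
  fixes x :: "int \<Rightarrow> complex"
  assumes periodic: "\<And>q. x (q + N) = x q" and "0 < N"
  shows "(\<Sum>q\<in>{0..<N}. x (- q) * cnj (x (p - q))) = cnj (\<Sum>q\<in>{0..<N}. x q * cnj (x (q - p)))"
proof -
  have shifted: "x (q + N - p) = x (q - p)" for q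
    using periodic[of "q - p"] by (simp add: algebra_simps)
  have "(\<Sum>q\<in>{0..<N}. x (p - q - p) * cnj (x (p - q))) = (\<Sum>q\<in>{0..<N}. x (q - p) * cnj (x q))"
    by (rule sum_periodic_reflect[where f = "\<lambda>r. x (r - p) * cnj (x r)"])
      (simp_all add: periodic shifted \<open>0 < N\<close>)
  then show ?thesis by (simp add: cnj_sum mult.commute)
qed

lemma periodic_support_mod_less:
  fixes x :: "int \<Rightarrow> 'a::zero" and N M :: int
  assumes "\<And>q. x (q + N) = x q" and "\<And>q. M \<le> q \<Longrightarrow> q < N \<Longrightarrow> x q = 0"
    and "0 < N" and "x q \<noteq> 0"
  shows "q mod N < M"
proof (rule ccontr)
  assume "\<not> q mod N < M"
  then have "x (q mod N) = 0" using assms(2) \<open>0 < N\<close> by simp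
  with \<open>x q \<noteq> 0\<close> show False by (simp add: periodic_mod[where f = x, OF assms(1)])
qed

lemma mod_support_no_pair_sum_neg:
  fixes x :: "int \<Rightarrow> 'a::zero" and N M p :: int
  assumes support: "\<And>q. x q \<noteq> 0 \<Longrightarrow> q mod N < M"
    and "0 < N" "0 < p" "p + 2 * M - 1 \<le> N" and "a + b = - p"
  shows "x a = 0 \<or> x b = 0"
proof (rule ccontr)
  assume "\<not> (x a = 0 \<or> x b = 0)"
  then have "a mod N < M" "b mod N < M" using support by auto
  moreover have "0 \<le> a mod N" "0 \<le> b mod N" using \<open>0 < N\<close> by simp_all
  ultimately have "a mod N + b mod N = (a mod N + b mod N) mod N"
    using \<open>0 < p\<close> \<open>p + 2 * M - 1 \<le> N\<close> by (intro mod_pos_pos_trivial[symmetric]) linarith+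
  also have "\<dots> = (a + b) mod N" by (rule mod_add_eq)
  also have "\<dots> = (N - p) mod N" using \<open>a + b = - p\<close> mod_add_self1[of "- p" N] by simp
  also have "\<dots> = N - p"
    using \<open>0 < p\<close> \<open>p + 2 * M - 1 \<le> N\<close> \<open>a mod N < M\<close> \<open>0 \<le> a mod N\<close>
    by (intro mod_pos_pos_trivial) linarith+
  finally show False using \<open>a mod N < M\<close> \<open>b mod N < M\<close> \<open>p + 2 * M - 1 \<le> N\<close> by linarith
qed

theorem lemma1:
  fixes M P :: nat and x :: "int \<Rightarrow> complex"
  assumes "M \<ge> 1" and "P = 4 * M - 3"
    and "periodic_fun P x"
    and "\<forall>p. int M \<le> p \<and> p \<le> 4 * int M - 4 \<longrightarrow> x p = 0"
  shows "\<forall>p. 1 \<le> p \<and> p \<le> 2 * int M - 2 \<longrightarrow>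
    CirAut P (\<lambda>q. x q + reversal x q) p
      = complex_of_real (2 * Re (inner_ZP P x (transl p x)))
        + inner_ZP P x (reversal (transl (- p) x))"
proof (intro allI impI)
  fix p :: int assume p: "1 \<le> p \<and> p \<le> 2 * int M - 2"
  define N where "N = int P"
  define A where "A = inner_ZP P x (transl p x)"
  define B where "B = inner_ZP P x (reversal (transl (- p) x))"
  have N: "N = 4 * int M - 3" "0 < N" using assms(1,2) by (simp_all add: N_def)
  have periodic: "\<And>q. x (q + N) = x q"
    using assms(3) by (simp add: periodic_fun_def N_def)
  have support: "\<And>q. x q \<noteq> 0 \<Longrightarrow> q mod N < int M"
    by (rule periodic_support_mod_less[where x = x and N = N, OF periodic _ \<open>0 < N\<close>]) (use assms(4) N in auto)
  have cross: "(\<Sum>q\<in>{0..<N}. x (- q) * cnj (x (q - p))) = 0"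
  proof (intro sum.neutral ballI)
    fix q
    have "x (- q) = 0 \<or> x (q - p) = 0"
      by (rule mod_support_no_pair_sum_neg[OF support \<open>0 < N\<close>]) (use p N in auto)
    then show "x (- q) * cnj (x (q - p)) = 0" by auto
  qed
  have reflected: "(\<Sum>q\<in>{0..<N}. x (- q) * cnj (x (p - q))) = cnj A"
    unfolding A_def inner_ZP_def transl_def N_def[symmetric]
    by (rule sum_reflected_product_eq_cnj[where x = x and N = N, OF periodic \<open>0 < N\<close>])
  have "CirAut P (\<lambda>q. x q + reversal x q) p
      = (\<Sum>q\<in>{0..<N}. x q * cnj (x (q - p)) + x q * cnj (x (p - q))
          + x (- q) * cnj (x (q - p)) + x (- q) * cnj (x (p - q)))"
    unfolding CirAut_def inner_ZP_def transl_def reversal_def N_def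
    by (rule sum.cong) (auto simp: algebra_simps)
  also have "\<dots> = A + B + cnj A"
    unfolding sum.distrib cross reflected
    by (simp add: A_def B_def inner_ZP_def transl_def reversal_def N_def)
  also have "\<dots> = complex_of_real (2 * Re A) + B"
    using complex_add_cnj[of A] by simp
  finally show "CirAut P (\<lambda>q. x q + reversal x q) p
      = complex_of_real (2 * Re (inner_ZP P x (transl p x)))
        + inner_ZP P x (reversal (transl (- p) x))"
    unfolding A_def B_def .
qed

end
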